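(* Let $L$ be a finite lattice and let $\phi:\ \hat 0=x_0<x_1<\dots<x_k=\hat 1$ be a chain of $L$ containing its minimum $\hat 0$ and maximum $\hat 1$. Let $\gamma_1,\gamma_1',\gamma_2,\gamma_2'$ be the four edge-labellings of $L$ associated to $\phi$ (defined in the context). Then, as functions on the set of cover relations of $L$ with values in the integers, $\gamma_2=\gamma_2'\le\gamma_1=\gamma_1'$ (pointwise). Moreover, $\gamma_1'=\gamma_2'$ if and only if $x_i$ is a left modular element of $L$ for every $i\in\{0,\dots,k\}$.
   Context: All lattices are finite. A join-irreducible element $j$ covers exactly one element; a meet-irreducible element $m$ is covered by exactly one element. For a join-irreducible $j$ set $\delta(j):=\min\{i\mid j\le x_i\}$; for a meet-irreducible $m$ set $\beta(m):=\max\{i\in\{1,\dots,k\}\mid m\ge x_{i-1}\}$. For a cover relation $b\lessdot c$ of $L$ define $\gamma_1(b\lessdot c):=\min\{\delta(j)\mid j \text{ join-irreducible},\ j\le c,\ j\not\le b\}$, $\gamma_1'(b\lessdot c):=\max\{i\in\{1,\dots,k\}\mid c\wedge x_{i-1}\le b\}$, $\gamma_2(b\lessdot c):=\max\{\beta(m)\mid m \text{ meet-irreducible},\ m\ge b,\ m\not\ge c\}$, $\gamma_2'(b\lessdot c):=\min\{i\in\{0,\dots,k\}\mid b\vee x_i\ge c\}$. An element $a\in L$ is left modular if for all $b<c$ in $L$ one has $(b\vee a)\wedge c=b\vee(a\wedge c)$. *)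

theory Defs
  imports Main
begin

definition covers :: "'a::order \<Rightarrow> 'a \<Rightarrow> bool" where
  "covers b c \<longleftrightarrow> b < c \<and> \<not> (\<exists>z. b < z \<and> z < c)"

definition join_irr :: "'a::order \<Rightarrow> bool" where
  "join_irr j \<longleftrightarrow> (\<exists>!b. covers b j)"

definition meet_irr :: "'a::order \<Rightarrow> bool" where
  "meet_irr m \<longleftrightarrow> (\<exists>!c. covers m c)"

text \<open>The chain is x 0 < x 1 < ... < x k.\<close>
definition delta :: "(nat \<Rightarrow> 'a::order) \<Rightarrow> nat \<Rightarrow> 'a \<Rightarrow> nat" where
  "delta x k j = Min {i. i \<le> k \<and> j \<le> x i}"

definition beta :: "(nat \<Rightarrow> 'a::order) \<Rightarrow> nat \<Rightarrow> 'a \<Rightarrow> nat" where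
  "beta x k m = Max {i. 1 \<le> i \<and> i \<le> k \<and> x (i - 1) \<le> m}"

definition gamma1 :: "(nat \<Rightarrow> 'a::lattice) \<Rightarrow> nat \<Rightarrow> 'a \<Rightarrow> 'a \<Rightarrow> nat" where
  "gamma1 x k b c = Min {delta x k j | j. join_irr j \<and> j \<le> c \<and> \<not> j \<le> b}"

definition gamma1' :: "(nat \<Rightarrow> 'a::lattice) \<Rightarrow> nat \<Rightarrow> 'a \<Rightarrow> 'a \<Rightarrow> nat" where
  "gamma1' x k b c = Max {i. 1 \<le> i \<and> i \<le> k \<and> inf c (x (i - 1)) \<le> b}"

definition gamma2 :: "(nat \<Rightarrow> 'a::lattice) \<Rightarrow> nat \<Rightarrow> 'a \<Rightarrow> 'a \<Rightarrow> nat" where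
  "gamma2 x k b c = Max {beta x k m | m. meet_irr m \<and> b \<le> m \<and> \<not> c \<le> m}"

definition gamma2' :: "(nat \<Rightarrow> 'a::lattice) \<Rightarrow> nat \<Rightarrow> 'a \<Rightarrow> 'a \<Rightarrow> nat" where
  "gamma2' x k b c = Min {i. i \<le> k \<and> c \<le> sup b (x i)}"

definition left_modular :: "'a::lattice \<Rightarrow> bool" where
  "left_modular a \<longleftrightarrow> (\<forall>b c. b < c \<longrightarrow> inf (sup b a) c = sup b (inf a c))"

end

(* The primed labellings of a cover b \<lessdot> c are thresholds along the chain:
   i < gamma1' iff c \<sqinter> x i \<le> b, and gamma2' \<le> i iff c \<le> b \<squnion> x i.  A join-irreducible
   below c \<sqinter> x i but not below b, resp. a meet-irreducible above b \<squnion> x (i - 1) but not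
   above c, shows that gamma1 and gamma2 attain these thresholds.  Since b \<lessdot> c, from
   c \<sqinter> x i \<not>\<le> b we get c = b \<squnion> (c \<sqinter> x i) \<le> b \<squnion> x i, whence gamma2' \<le> gamma1'.  Equality
   at every cover says that no cover y \<lessdot> w has both w \<le> y \<squnion> x i and w \<sqinter> x i \<le> y, and in a
   finite lattice this cover condition is equivalent to left modularity of x i. *)

theory Submission
  imports Defs
begin

lemma Min_bounded_index:
  fixes P :: "nat \<Rightarrow> bool"
  assumes "P k"
  shows "Min {i. i \<le> k \<and> P i} \<le> k"
    and "P (Min {i. i \<le> k \<and> P i})"
    and "n \<le> k \<Longrightarrow> P n \<Longrightarrow> Min {i. i \<le> k \<and> P i} \<le> n"
proof -
  let ?S = "{i. i \<le> k \<and> P i}"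
  have fin: "finite ?S" by (rule finite_subset[of _ "{..k}"]) auto
  have "Min ?S \<in> ?S" using fin by (rule Min_in) (use assms in blast)
  then show "Min ?S \<le> k" "P (Min ?S)" by blast+
  show "n \<le> k \<Longrightarrow> P n \<Longrightarrow> Min ?S \<le> n" using fin by (simp add: Min_le)
qed

lemma Max_bounded_index:
  fixes P :: "nat \<Rightarrow> bool"
  assumes "P 0" and "0 < k"
  shows "1 \<le> Max {i. 1 \<le> i \<and> i \<le> k \<and> P (i - 1)}"
    and "Max {i. 1 \<le> i \<and> i \<le> k \<and> P (i - 1)} \<le> k"
    and "P (Max {i. 1 \<le> i \<and> i \<le> k \<and> P (i - 1)} - 1)"
    and "1 \<le> n \<Longrightarrow> n \<le> k \<Longrightarrow> P (n - 1) \<Longrightarrow> n \<le> Max {i. 1 \<le> i \<and> i \<le> k \<and> P (i - 1)}"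
proof -
  let ?S = "{i. 1 \<le> i \<and> i \<le> k \<and> P (i - 1)}"
  have fin: "finite ?S" by (rule finite_subset[of _ "{..k}"]) auto
  have "1 \<in> ?S" using assms by simp
  with fin have "Max ?S \<in> ?S" by (intro Max_in) auto
  then show "1 \<le> Max ?S" "Max ?S \<le> k" "P (Max ?S - 1)" by blast+
  show "1 \<le> n \<Longrightarrow> n \<le> k \<Longrightarrow> P (n - 1) \<Longrightarrow> n \<le> Max ?S" using fin by (simp add: Max_ge)
qed

lemma covers_imp_not_le: "covers b c \<Longrightarrow> \<not> c \<le> b"
  unfolding covers_def by (simp add: less_le_not_le)

lemma exists_covers_below:
  fixes a b :: "'a::{finite,order}"
  assumes "a < b"
  shows "\<exists>c. a \<le> c \<and> covers c b"
proof -
  obtain c where c: "a \<le> c" "c < b" and max: "\<And>w. c \<le> w \<Longrightarrow> w < b \<Longrightarrow> c = w"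
    using finite_has_maximal2[of "{w. a \<le> w \<and> w < b}" a] assms by auto
  have "covers c b"
    unfolding covers_def using c(2) max by (auto simp: less_le)
  with c(1) show ?thesis by blast
qed

lemma exists_covers_above:
  fixes a b :: "'a::{finite,order}"
  assumes "a < b"
  shows "\<exists>c. covers a c \<and> c \<le> b"
proof -
  obtain c where c: "a < c" "c \<le> b" and min: "\<And>w. a < w \<Longrightarrow> w \<le> c \<Longrightarrow> c = w"
    using finite_has_minimal2[of "{w. a < w \<and> w \<le> b}" b] assms by auto
  have "covers a c"
    unfolding covers_def using c(1) min by (auto simp: less_le)
  with c(2) show ?thesis by blast
qed

lemma covers_sup_eq:
  fixes u v y :: "'a::lattice"
  assumes "covers u y" and "covers v y" and "u \<noteq> v"
  shows "sup u v = y"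
proof (rule ccontr)
  assume "sup u v \<noteq> y"
  moreover have "sup u v \<le> y" using assms(1,2) unfolding covers_def by (simp add: less_imp_le)
  ultimately have "sup u v < y" by (simp add: less_le)
  then have "sup u v = u" using assms(1) unfolding covers_def by (metis sup_ge1 order.not_eq_order_implies_strict)
  then have "v < u" using assms(3) by (metis sup_ge2 order.not_eq_order_implies_strict)
  then show False using assms(1,2) unfolding covers_def by blast
qed

lemma covers_inf_eq:
  fixes u v z :: "'a::lattice"
  assumes "covers z u" and "covers z v" and "u \<noteq> v"
  shows "inf u v = z"
proof (rule ccontr)
  assume "inf u v \<noteq> z"
  moreover have "z \<le> inf u v" using assms(1,2) unfolding covers_def by (simp add: less_imp_le)
  ultimately have "z < inf u v" by (auto simp: less_le)
  then have "inf u v = u" using assms(1) unfolding covers_def by (metis inf_le1 order.not_eq_order_implies_strict)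
  then have "u < v" using assms(3) by (metis inf_le2 order.not_eq_order_implies_strict)
  then show False using assms(1,2) unfolding covers_def by blast
qed

text \<open>A minimal element of the lattice below \<open>y\<close> but not below \<open>z\<close> has all its lower
  covers below \<open>z\<close>; two of them would join to it, so it has exactly one.\<close>

lemma exists_join_irr_le:
  fixes y z :: "'a::{finite,lattice}"
  assumes "\<not> y \<le> z"
  shows "\<exists>j. join_irr j \<and> j \<le> y \<and> \<not> j \<le> z"
proof -
  obtain j where j: "j \<le> y" "\<not> j \<le> z"
    and min: "\<And>v. v \<le> y \<Longrightarrow> \<not> v \<le> z \<Longrightarrow> v \<le> j \<Longrightarrow> j = v"
    using finite_has_minimal2[of "{v. v \<le> y \<and> \<not> v \<le> z}" y] assms by auto
  have below_z: "v \<le> z" if "covers v j" for v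
    using that j(1) min unfolding covers_def by (metis order.strict_iff_not order_trans)
  have "inf j z < j" using j(2) by (metis inf_le1 inf_le2 less_le)
  then obtain u where u: "covers u j" using exists_covers_below by blast
  have "join_irr j"
    unfolding join_irr_def
  proof (rule ex1I[of _ u])
    fix v assume v: "covers v j"
    show "v = u"
    proof (rule ccontr)
      assume "v \<noteq> u"
      then have "sup v u = j" using covers_sup_eq v u by blast
      then show False using below_z[OF u] below_z[OF v] j(2) by (metis le_sup_iff)
    qed
  qed (rule u)
  with j show ?thesis by blast
qed

lemma exists_meet_irr_ge:
  fixes w z :: "'a::{finite,lattice}"
  assumes "\<not> w \<le> z"
  shows "\<exists>m. meet_irr m \<and> z \<le> m \<and> \<not> w \<le> m"
proof -
  obtain m where m: "z \<le> m" "\<not> w \<le> m"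
    and max: "\<And>v. z \<le> v \<Longrightarrow> \<not> w \<le> v \<Longrightarrow> m \<le> v \<Longrightarrow> m = v"
    using finite_has_maximal2[of "{v. z \<le> v \<and> \<not> w \<le> v}" z] assms by auto
  have above_w: "w \<le> v" if "covers m v" for v
    using that m(1) max unfolding covers_def by (metis order.strict_iff_not order_trans)
  have "m < sup w m" using m(2) by (metis sup_ge1 sup_ge2 less_le)
  then obtain u where u: "covers m u" using exists_covers_above by blast
  have "meet_irr m"
    unfolding meet_irr_def
  proof (rule ex1I[of _ u])
    fix v assume v: "covers m v"
    show "v = u"
    proof (rule ccontr)
      assume "v \<noteq> u"
      then have "inf v u = m" using covers_inf_eq v u by blast
      then show False using above_w[OF u] above_w[OF v] m(2) by (metis le_inf_iff)
    qed
  qed (rule u)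
  with m show ?thesis by blast
qed

lemma covers_le_sup_if_not_inf_le:
  fixes a b c :: "'a::lattice"
  assumes "covers b c" and "\<not> inf c a \<le> b"
  shows "c \<le> sup b a"
proof -
  have "b < sup b (inf c a)" using assms(2) by (metis sup_ge1 sup_ge2 less_le)
  moreover have "sup b (inf c a) \<le> c" using assms(1) unfolding covers_def by (simp add: less_imp_le)
  ultimately have "sup b (inf c a) = c" using assms(1) unfolding covers_def by (meson less_le)
  moreover have "sup b (inf c a) \<le> sup b a" by (simp add: le_supI2)
  ultimately show ?thesis by simp
qed

text \<open>Conversely, a failure \<open>b \<squnion> (a \<sqinter> c) < (b \<squnion> a) \<sqinter> c\<close> of left modularity yields a
  violating cover \<open>y \<lessdot> w\<close> with \<open>y = b \<squnion> (a \<sqinter> c)\<close> and \<open>w \<le> (b \<squnion> a) \<sqinter> c\<close>.\<close>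

lemma left_modular_iff_covers:
  fixes a :: "'a::{finite,lattice}"
  shows "left_modular a \<longleftrightarrow> (\<forall>y w. covers y w \<longrightarrow> w \<le> sup y a \<longrightarrow> \<not> inf w a \<le> y)"
proof
  assume lm: "left_modular a"
  show "\<forall>y w. covers y w \<longrightarrow> w \<le> sup y a \<longrightarrow> \<not> inf w a \<le> y"
  proof (intro allI impI notI)
    fix y w assume cv: "covers y w" and "w \<le> sup y a" and "inf w a \<le> y"
    have "y < w" using cv unfolding covers_def by simp
    have "w = inf (sup y a) w" using \<open>w \<le> sup y a\<close> by (simp add: inf_absorb2)
    also have "\<dots> = sup y (inf a w)"
      using lm[unfolded left_modular_def, rule_format, OF \<open>y < w\<close>] .
    also have "\<dots> = y" using \<open>inf w a \<le> y\<close> by (simp add: inf_commute sup_absorb1)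
    finally show False using \<open>y < w\<close> by simp
  qed
next
  assume cond: "\<forall>y w. covers y w \<longrightarrow> w \<le> sup y a \<longrightarrow> \<not> inf w a \<le> y"
  show "left_modular a"
    unfolding left_modular_def
  proof (intro allI impI)
    fix b c :: 'a assume "b < c"
    let ?y = "sup b (inf a c)" and ?z = "inf (sup b a) c"
    have "?y \<le> ?z" using \<open>b < c\<close> by (simp add: less_imp_le le_supI2)
    moreover have "\<not> ?y < ?z"
    proof
      assume "?y < ?z"
      then obtain w where cv: "covers ?y w" and "w \<le> ?z" using exists_covers_above by blast
      note \<open>w \<le> ?z\<close>
      also have "?z \<le> sup b a" by simp
      also have "\<dots> \<le> sup ?y a" by (intro sup_mono) simp_all
      finally have "w \<le> sup ?y a" .
      have "inf w a \<le> inf ?z a" using \<open>w \<le> ?z\<close> by (intro inf_mono) simp_all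
      also have "\<dots> \<le> inf a c" by (simp add: le_infI1)
      also have "\<dots> \<le> ?y" by simp
      finally show False using cond cv \<open>w \<le> sup ?y a\<close> by blast
    qed
    ultimately show "?z = ?y" by (metis order.not_eq_order_implies_strict)
  qed
qed

locale bounded_chain =
  fixes x :: "nat \<Rightarrow> 'a::{finite, bounded_lattice}" and k :: nat
  assumes chain_less: "\<And>i. i < k \<Longrightarrow> x i < x (Suc i)"
    and chain_bot: "x 0 = bot" and chain_top: "x k = top"
begin

lemma chain_mono: "i \<le> j \<Longrightarrow> j \<le> k \<Longrightarrow> x i \<le> x j"
  by (rule lift_Suc_mono_le_ivl[where N = "{..<k}"]) (auto intro: less_imp_le chain_less)

lemma length_pos:
  fixes b c :: 'a
  assumes "\<not> c \<le> b"
  shows "0 < k"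
proof (rule ccontr)
  assume "\<not> 0 < k"
  have "c \<le> top" by simp
  also have "top = x 0" using \<open>\<not> 0 < k\<close> chain_top by simp
  also have "\<dots> \<le> b" by (simp add: chain_bot)
  finally have "c \<le> b" .
  with assms show False by contradiction
qed

lemma gamma2'_le_length: "gamma2' x k b c \<le> k"
  unfolding gamma2'_def by (rule Min_bounded_index) (simp add: chain_top)

lemma gamma2'_le_iff:
  assumes "i \<le> k"
  shows "gamma2' x k b c \<le> i \<longleftrightarrow> c \<le> sup b (x i)"
proof
  assume "gamma2' x k b c \<le> i"
  have "c \<le> sup b (x (gamma2' x k b c))"
    unfolding gamma2'_def by (rule Min_bounded_index) (simp add: chain_top)
  also have "\<dots> \<le> sup b (x i)"
    using chain_mono[OF \<open>gamma2' x k b c \<le> i\<close> assms] by (rule sup_mono[OF order_refl])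
  finally show "c \<le> sup b (x i)" .
next
  assume "c \<le> sup b (x i)"
  then show "gamma2' x k b c \<le> i"
    unfolding gamma2'_def using assms by (intro Min_bounded_index(3)) (simp_all add: chain_top)
qed

lemma gamma2'_pos: "\<not> c \<le> b \<Longrightarrow> 1 \<le> gamma2' x k b c"
  using gamma2'_le_iff[of 0 b c] by (simp add: chain_bot)

lemma gamma1'_le_length: "\<not> c \<le> b \<Longrightarrow> gamma1' x k b c \<le> k"
  unfolding gamma1'_def by (rule Max_bounded_index) (simp_all add: chain_bot length_pos)

lemma less_gamma1'_iff:
  assumes "\<not> c \<le> b" and "i \<le> k"
  shows "i < gamma1' x k b c \<longleftrightarrow> inf c (x i) \<le> b"
proof -
  let ?P = "\<lambda>i. inf c (x i) \<le> b" and ?g = "gamma1' x k b c"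
  have P0: "?P 0" and k: "0 < k" using assms(1) by (simp_all add: chain_bot length_pos)
  note g = Max_bounded_index[where P = ?P, OF P0 k, folded gamma1'_def]
  show ?thesis
  proof
    assume "i < ?g"
    then have "x i \<le> x (?g - 1)" using g(2) by (intro chain_mono) auto
    then have "inf c (x i) \<le> inf c (x (?g - 1))" by (rule inf_mono[OF order_refl])
    also have "\<dots> \<le> b" by (rule g(3))
    finally show "?P i" .
  next
    assume "?P i"
    then have "i \<noteq> k" using assms(1) by (auto simp: chain_top)
    then show "i < ?g" using g(4)[of "Suc i"] \<open>?P i\<close> assms(2) by simp
  qed
qed

lemma gamma1_eq_gamma1':
  assumes "\<not> c \<le> b"
  shows "gamma1 x k b c = gamma1' x k b c"
proof -
  let ?g = "gamma1' x k b c"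
  let ?J = "{delta x k j | j. join_irr j \<and> j \<le> c \<and> \<not> j \<le> b}"
  have delta: "delta x k j \<le> k" "j \<le> x (delta x k j)" "j \<le> x i \<Longrightarrow> i \<le> k \<Longrightarrow> delta x k j \<le> i"
    for j i unfolding delta_def by (rule Min_bounded_index; simp add: chain_top)+
  have lower: "?g \<le> d" if "d \<in> ?J" for d
  proof -
    obtain j where j: "d = delta x k j" "j \<le> c" "\<not> j \<le> b" using \<open>d \<in> ?J\<close> by blast
    then have "\<not> inf c (x (delta x k j)) \<le> b" using delta(2) by (meson le_inf_iff order_trans)
    then have "\<not> delta x k j < ?g" using less_gamma1'_iff[OF assms delta(1)] by blast
    then show ?thesis using j(1) by simp
  qed
  moreover have "?g \<in> ?J"
  proof -
    have "\<not> inf c (x ?g) \<le> b" using less_gamma1'_iff[OF assms gamma1'_le_length[OF assms]] by simp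
    then obtain j where j: "join_irr j" "j \<le> inf c (x ?g)" "\<not> j \<le> b"
      using exists_join_irr_le by blast
    then have mem: "delta x k j \<in> ?J" by auto
    have "delta x k j \<le> ?g" using delta(3) j(2) gamma1'_le_length[OF assms] by simp
    then have "delta x k j = ?g" using lower[OF mem] by simp
    with mem show ?thesis by simp
  qed
  ultimately show ?thesis unfolding gamma1_def by (intro Min_eqI) auto
qed

lemma gamma2_eq_gamma2':
  assumes "\<not> c \<le> b"
  shows "gamma2 x k b c = gamma2' x k b c"
proof -
  let ?g = "gamma2' x k b c"
  let ?M = "{beta x k m | m. meet_irr m \<and> b \<le> m \<and> \<not> c \<le> m}"
  have k: "0 < k" using length_pos[OF assms] .
  have beta: "1 \<le> beta x k m" "beta x k m \<le> k" "x (beta x k m - 1) \<le> m"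
    "1 \<le> i \<Longrightarrow> i \<le> k \<Longrightarrow> x (i - 1) \<le> m \<Longrightarrow> i \<le> beta x k m"
    for m i unfolding beta_def by (rule Max_bounded_index; simp add: chain_bot k)+
  have upper: "d \<le> ?g" if "d \<in> ?M" for d
  proof -
    obtain m where m: "d = beta x k m" "b \<le> m" "\<not> c \<le> m" using \<open>d \<in> ?M\<close> by blast
    then have "\<not> c \<le> sup b (x (beta x k m - 1))" using beta(3) by (meson le_sup_iff order_trans)
    then have "\<not> ?g \<le> beta x k m - 1" using gamma2'_le_iff[of "beta x k m - 1" b c] beta(2)[of m] by simp
    then show ?thesis using m(1) by simp
  qed
  moreover have "?g \<in> ?M"
  proof -
    have "?g - 1 \<le> k" and "\<not> ?g \<le> ?g - 1"
      using gamma2'_le_length[of b c] gamma2'_pos[OF assms] by simp_all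
    then have "\<not> c \<le> sup b (x (?g - 1))" using gamma2'_le_iff by blast
    then obtain m where m: "meet_irr m" "sup b (x (?g - 1)) \<le> m" "\<not> c \<le> m"
      using exists_meet_irr_ge by blast
    then have mem: "beta x k m \<in> ?M" by auto
    have "?g \<le> beta x k m"
      using beta(4) m(2) gamma2'_pos[OF assms] gamma2'_le_length by simp
    then have "beta x k m = ?g" using upper[OF mem] by simp
    with mem show ?thesis by simp
  qed
  ultimately show ?thesis unfolding gamma2_def by (intro Max_eqI) auto
qed

lemma gamma2'_le_gamma1':
  assumes "covers b c"
  shows "gamma2' x k b c \<le> gamma1' x k b c"
proof -
  note not_le = covers_imp_not_le[OF assms]
  let ?g = "gamma1' x k b c"
  have "\<not> inf c (x ?g) \<le> b" using less_gamma1'_iff[OF not_le gamma1'_le_length[OF not_le]] by simp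
  then have "c \<le> sup b (x ?g)" using covers_le_sup_if_not_inf_le[OF assms] by blast
  then show ?thesis using gamma2'_le_iff gamma1'_le_length[OF not_le] by blast
qed

lemma gamma1'_le_gamma2'_iff:
  assumes "\<not> c \<le> b"
  shows "gamma1' x k b c \<le> gamma2' x k b c \<longleftrightarrow>
    (\<forall>i\<le>k. c \<le> sup b (x i) \<longrightarrow> \<not> inf c (x i) \<le> b)"
proof
  assume le: "gamma1' x k b c \<le> gamma2' x k b c"
  show "\<forall>i\<le>k. c \<le> sup b (x i) \<longrightarrow> \<not> inf c (x i) \<le> b"
  proof (intro allI impI)
    fix i assume "i \<le> k" and "c \<le> sup b (x i)"
    then have "gamma2' x k b c \<le> i" using gamma2'_le_iff by blast
    with le show "\<not> inf c (x i) \<le> b" using less_gamma1'_iff[OF assms \<open>i \<le> k\<close>] by simp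
  qed
next
  let ?g = "gamma2' x k b c"
  assume "\<forall>i\<le>k. c \<le> sup b (x i) \<longrightarrow> \<not> inf c (x i) \<le> b"
  then have "\<not> inf c (x ?g) \<le> b" using gamma2'_le_iff gamma2'_le_length by blast
  then show "gamma1' x k b c \<le> ?g" using less_gamma1'_iff[OF assms gamma2'_le_length[of b c]] by simp
qed

lemma gamma1'_eq_gamma2'_iff_left_modular:
  "(\<forall>b c. covers b c \<longrightarrow> gamma1' x k b c = gamma2' x k b c) \<longleftrightarrow> (\<forall>i\<le>k. left_modular (x i))"
proof -
  have eq: "gamma1' x k b c = gamma2' x k b c \<longleftrightarrow>
      (\<forall>i\<le>k. c \<le> sup b (x i) \<longrightarrow> \<not> inf c (x i) \<le> b)" if "covers b c" for b c
  proof -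
    have "gamma1' x k b c = gamma2' x k b c \<longleftrightarrow> gamma1' x k b c \<le> gamma2' x k b c"
      using gamma2'_le_gamma1'[OF that] by auto
    also have "\<dots> \<longleftrightarrow> (\<forall>i\<le>k. c \<le> sup b (x i) \<longrightarrow> \<not> inf c (x i) \<le> b)"
      by (rule gamma1'_le_gamma2'_iff[OF covers_imp_not_le[OF that]])
    finally show ?thesis .
  qed
  show ?thesis
    unfolding left_modular_iff_covers using eq by blast
qed

end

theorem theorem3p3:
  fixes x :: "nat \<Rightarrow> 'a::{finite, bounded_lattice}" and k :: nat
  assumes chain: "\<And>i. i < k \<Longrightarrow> x i < x (Suc i)"
    and bot: "x 0 = bot" and top: "x k = top"
  shows "(\<forall>b c. covers b c \<longrightarrow>
            gamma2 x k b c = gamma2' x k b c \<and>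
            gamma2' x k b c \<le> gamma1 x k b c \<and>
            gamma1 x k b c = gamma1' x k b c)
         \<and> ((\<forall>b c. covers b c \<longrightarrow> gamma1' x k b c = gamma2' x k b c)
              \<longleftrightarrow> (\<forall>i\<le>k. left_modular (x i)))"
proof -
  interpret bounded_chain x k
    using assms by unfold_locales
  have "gamma2 x k b c = gamma2' x k b c \<and> gamma2' x k b c \<le> gamma1 x k b c \<and>
      gamma1 x k b c = gamma1' x k b c" if "covers b c" for b c
    using gamma2_eq_gamma2' gamma1_eq_gamma1' gamma2'_le_gamma1'[OF that]
      covers_imp_not_le[OF that] by simp
  with gamma1'_eq_gamma2'_iff_left_modular show ?thesis by blast
qed

end
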